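(* Let $n\ge1$ and let $\mathbf{u}_0,\dots,\mathbf{u}_n$ be linearly independent unit vectors in $\mathbf{C}^{n+1}$, regarded as the vertices $[\mathbf{u}_0],\dots,[\mathbf{u}_n]$ of a projective simplex in $\mathbf{CP}^n$. For each $j=0,\dots,n$ let $d_j$ be the Fubini–Study distance from $[\mathbf{u}_j]$ to the hyperplane $\{[\mathbf{x}]:\mathbf{x}\in\operatorname{span}(\mathbf{u}_i:i\ne j)\setminus\{0\}\}$ containing the opposite face, and let $d_{\min}=\min_j d_j$. Then $$d_{\min}^n\le|\det(\mathbf{u}_0,\dots,\mathbf{u}_n)|.$$ Moreover, if equality holds, then at least $n$ of the $n+1$ distances $d_0,\dots,d_n$ equal $d_{\min}$.
   Context: The dot product on $\mathbf{C}^{n+1}$ is the bilinear form $\mathbf{a}\cdot\mathbf{b}=\sum_i a_ib_i$ (standard basis $\mathbf{e}_0,\dots,\mathbf{e}_n$), and $|\mathbf{a}|^2=\mathbf{a}\cdot\overline{\mathbf{a}}$. On $\Lambda^k\mathbf{C}^{n+1}$ the basis $\mathbf{e}_{i_1}\wedge\dots\wedge\mathbf{e}_{i_k}$ ($i_1<\dots<i_k$) is declared orthonormal, giving a norm $|\omega|^2=\omega\cdot\overline\omega$. $\mathbf{CP}^n$ is the set of classes $[\mathbf{v}]$ of nonzero vectors of $\mathbf{C}^{n+1}$ modulo nonzero scalars. The Fubini–Study distance between points represented by unit vectors $\mathbf{v},\mathbf{w}$ is $|\mathbf{v}\wedge\mathbf{w}|$; the distance from a point $[\mathbf{u}]$ ($|\mathbf{u}|=1$)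 to a hyperplane $H$ is the minimum of $|\mathbf{u}\wedge\mathbf{x}|$ over unit vectors $\mathbf{x}$ with $[\mathbf{x}]\in H$. $\det(\mathbf{u}_0,\dots,\mathbf{u}_n)$ is the determinant of the matrix with these rows. *)

theory Defs
  imports "HOL-Analysis.Analysis"
begin

text \<open>Vectors of C^(n+1) are complex^'n with CARD('n) = n+1; the index type is
  linearly ordered so that the standard basis e_0,...,e_n is ordered.\<close>

text \<open>Norm of v wedge w in Lambda^2, basis e_i wedge e_j (i<j) orthonormal:
  v wedge w = sum_{i<j} (v_i w_j - v_j w_i) e_i wedge e_j.\<close>
definition wedge_norm :: "complex^('n::{finite,linorder}) \<Rightarrow> complex^('n::{finite,linorder}) \<Rightarrow> real" where
  "wedge_norm v w = sqrt (\<Sum>(i,j)\<in>{(i,j). i < j}. (cmod (v$i * w$j - v$j * w$i))\<^sup>2)"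

text \<open>Fubini-Study distance from the point [u] (u a unit vector) to the projective
  hyperplane coming from the complex linear subspace S: the minimum (infimum, which
  is attained) of |u wedge x| over unit vectors x in S.\<close>
definition fs_dist_hyp :: "complex^('n::{finite,linorder}) \<Rightarrow> (complex^('n::{finite,linorder})) set \<Rightarrow> real" where
  "fs_dist_hyp u S = Inf {wedge_norm u x | x. x \<in> S \<and> norm x = 1}"

definition vertex_dist :: "('n::{finite,linorder} \<Rightarrow> complex^('n::{finite,linorder})) \<Rightarrow> ('n::{finite,linorder}) \<Rightarrow> real" where
  "vertex_dist u j = fs_dist_hyp (u j) (vec.span (u ` (UNIV - {j})))"

end

theory Submission imports Defs begin

(* Apply Gram-Schmidt to the vertices u_0, ..., u_n in the order of the
   index type: g_k is the component of u_k orthogonal to V_k = span (u_i : i < k).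
   (1) The Hermitian Gram matrices (<g_k, u_l>) and (<g_k, g_l>) are triangular and diagonal
       with diagonal |g_k|^2, and both factor as (matrix of rows) * (conjugate transpose);
       hence |det(u_0, ..., u_n)| = prod_k |g_k|.
   (2) By the Lagrange identity |v ^ w|^2 = |v|^2 |w|^2 - |<v,w>|^2, some unit vector of V_k has
       wedge distance at most |g_k| from u_k; since V_k lies in the hyperplane opposite u_k,
       d_k <= |g_k| for every k > 0, while g_0 = u_0 is a unit vector.
   Together, prod_{k > 0} d_k <= |det(u_0, ..., u_n)|, and the determinant is nonzero.
   The theorem is then an elementary fact about n nonnegative reals bounded below by their
   minimum: the minimum to the n-th power is below the product, with equality only if all
   n factors equal the minimum. *)

section \<open>The Hermitian inner product on complex vectors\<close>

definition herm :: "complex^('n::finite) \<Rightarrow> complex^'n \<Rightarrow> complex" where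
  "herm v w = (\<Sum>i\<in>UNIV. v$i * cnj (w$i))"

lemma herm_cnj: "herm w v = cnj (herm v w)"
  unfolding herm_def by (simp add: mult.commute)

lemma norm_vec_square: "(norm (v::complex^'n))^2 = (\<Sum>i\<in>UNIV. (cmod (v$i))^2)"
  unfolding norm_vec_def L2_set_def by (simp add: sum_nonneg)

lemma herm_self: "herm v v = of_real ((norm v)^2)"
  unfolding herm_def norm_vec_square of_real_sum complex_norm_square ..

lemma herm_add_left: "herm (v + w) x = herm v x + herm w x"
  unfolding herm_def by (simp add: distrib_right sum.distrib)

lemma herm_add_right: "herm x (v + w) = herm x v + herm x w"
  unfolding herm_def by (simp add: distrib_left sum.distrib)

lemma herm_scale_right: "herm x (c *s v) = cnj c * herm x v"
  unfolding herm_def by (simp add: sum_distrib_left mult.assoc mult.left_commute)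

text \<open>Hermitian orthogonality is real orthogonality to both w and i w; this lets us use
  the real orthogonal decomposition of HOL-Analysis.\<close>

lemma herm_eq_0_iff: "herm v w = 0 \<longleftrightarrow> inner v w = 0 \<and> inner v (\<i> *s w) = 0"
proof -
  have "Re (herm v w) = inner v w"
    unfolding herm_def inner_vec_def inner_complex_def Re_sum by simp
  moreover have "Im (herm v w) = inner v (\<i> *s w)"
    unfolding herm_def inner_vec_def inner_complex_def Im_sum by (simp add: algebra_simps)
  ultimately show ?thesis by (simp add: complex_eq_iff)
qed

section \<open>The Lagrange identity for the wedge norm\<close>

lemma sum_all_minors_square:
  fixes v w :: "complex^('n::{finite,linorder})"
  shows "(\<Sum>p\<in>UNIV. (cmod (v$fst p * w$snd p - v$snd p * w$fst p))\<^sup>2)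
       = 2 * ((norm v)^2 * (norm w)^2 - (cmod (herm v w))^2)"
proof -
  have "complex_of_real (\<Sum>p\<in>UNIV. (cmod (v$fst p * w$snd p - v$snd p * w$fst p))\<^sup>2)
     = (\<Sum>i\<in>UNIV. \<Sum>j\<in>UNIV. (v$i * w$j - v$j * w$i) * cnj (v$i * w$j - v$j * w$i))"
    unfolding of_real_sum complex_norm_square
    by (simp add: UNIV_Times_UNIV[symmetric] sum.cartesian_product split_def del: UNIV_Times_UNIV)
  also have "\<dots> = (\<Sum>i\<in>UNIV. \<Sum>j\<in>UNIV. (v$i * cnj (v$i)) * (w$j * cnj (w$j))
       + (w$i * cnj (w$i)) * (v$j * cnj (v$j))
       - (v$i * cnj (w$i)) * (w$j * cnj (v$j)) - (w$i * cnj (v$i)) * (v$j * cnj (w$j)))"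
    by (intro sum.cong refl) (simp add: algebra_simps)
  also have "\<dots> = herm v v * herm w w + herm w w * herm v v - herm v w * herm w v - herm w v * herm v w"
    unfolding herm_def sum_subtractf sum.distrib sum_product ..
  also have "\<dots> = complex_of_real (2 * ((norm v)^2 * (norm w)^2 - (cmod (herm v w))^2))"
    using herm_cnj[of w v] complex_norm_square[of "herm v w"] by (simp add: herm_self)
  finally show ?thesis by (simp only: of_real_eq_iff)
qed

text \<open>The minors for (i,j) and (j,i) have the same modulus and the diagonal ones vanish,
  so the pairs i < j carry exactly half of the full sum.\<close>

lemma wedge_norm_square:
  fixes v w :: "complex^('n::{finite,linorder})"
  shows "(wedge_norm v w)^2 = (norm v)^2 * (norm w)^2 - (cmod (herm v w))^2"
proof -
  define f where "f = (\<lambda>p::'n\<times>'n. (cmod (v$fst p * w$snd p - v$snd p * w$fst p))\<^sup>2)"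
  define A where "A = ({(i,j). i < j} :: ('n\<times>'n) set)"
  have UNIV_split: "UNIV = A \<union> prod.swap ` A \<union> {p. fst p = snd p}"
    unfolding A_def by (auto simp: image_iff not_less_iff_gr_or_eq)
  have "sum f UNIV = sum f A + sum f (prod.swap ` A) + sum f {p. fst p = snd p}"
    unfolding UNIV_split by (subst sum.union_disjoint, auto simp: A_def)+
  moreover have "sum f {p. fst p = snd p} = 0"
    unfolding f_def by (intro sum.neutral) auto
  moreover have "sum f (prod.swap ` A) = sum f A"
    by (subst sum.reindex) (auto simp: f_def norm_minus_commute mult.commute intro!: sum.cong)
  ultimately have "sum f UNIV = 2 * sum f A" by simp
  moreover have "(wedge_norm v w)^2 = sum f A"
    unfolding wedge_norm_def f_def A_def by (simp add: sum_nonneg split_def)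
  ultimately show ?thesis using sum_all_minors_square[of v w] unfolding f_def by simp
qed

lemma wedge_norm_nonneg: "0 \<le> wedge_norm u x"
  unfolding wedge_norm_def by (auto intro!: real_sqrt_ge_zero sum_nonneg)

section \<open>Orthogonal projection onto a complex span\<close>

lemma scaleR_as_smult: "r *\<^sub>R (v::complex^'n) = complex_of_real r *s v"
  unfolding vec_eq_iff vector_scaleR_component vector_smult_component by (simp add: scaleR_conv_of_real)

lemma subspace_vec_span: "subspace (vec.span (A::(complex^'n) set))"
  unfolding subspace_def
  by (auto simp: vec.span_zero vec.span_add scaleR_as_smult intro: vec.span_scale)

lemma orthogonal_component_exists:
  fixes A :: "(complex^'n) set" and x :: "complex^'n"
  obtains g where "x - g \<in> vec.span A" "\<And>w. w \<in> vec.span A \<Longrightarrow> herm g w = 0"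
proof -
  let ?W = "vec.span A"
  have span_W: "span ?W = ?W" using subspace_vec_span span_eq_iff by blast
  obtain y z where y: "y \<in> span ?W" and z: "\<And>w. w \<in> span ?W \<Longrightarrow> orthogonal z w" and "x = y + z"
    using orthogonal_subspace_decomp_exists[of ?W x] by blast
  show ?thesis
  proof
    show "x - z \<in> ?W" using y span_W \<open>x = y + z\<close> by simp
    fix w assume w: "w \<in> ?W"
    have "\<i> *s w \<in> ?W" using w by (rule vec.span_scale)
    thus "herm z w = 0" using z w span_W unfolding herm_eq_0_iff orthogonal_def by auto
  qed
qed

lemma fs_dist_hyp_le:
  assumes "x \<in> S" "norm x = 1"
  shows "fs_dist_hyp u S \<le> wedge_norm u x"
  unfolding fs_dist_hyp_def
proof (rule cInf_lower)
  show "bdd_below {wedge_norm u x |x. x \<in> S \<and> norm x = 1}"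
    by (rule bdd_belowI[where m=0]) (auto simp: wedge_norm_nonneg)
qed (use assms in auto)

lemma fs_dist_hyp_nonneg:
  assumes "x \<in> S" "norm x = 1"
  shows "0 \<le> fs_dist_hyp u S"
  unfolding fs_dist_hyp_def
  by (rule cInf_greatest) (use assms wedge_norm_nonneg in auto)

text \<open>The witness is p / |p| (or any unit vector of W if p = 0), for which
  |u ^ x|^2 = 1 - |p|^2 = |g|^2 by the Lagrange identity.\<close>

lemma fs_dist_hyp_le_orthogonal_component:
  fixes u g a :: "complex^('n::{finite,linorder})"
  assumes u1: "norm u = 1" and ug: "u - g \<in> vec.span A"
    and orth: "\<And>w. w \<in> vec.span A \<Longrightarrow> herm g w = 0"
    and a: "a \<in> vec.span A" "norm a = 1" and sub: "vec.span A \<subseteq> S"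
  shows "fs_dist_hyp u S \<le> norm g"
proof -
  define p where "p = u - g"
  have pA: "p \<in> vec.span A" using ug p_def by simp
  have u_split: "u = g + p" by (simp add: p_def)
  have "herm p g = 0" using orth[OF pA] herm_cnj[of p g] by simp
  then have "herm u u = herm g g + herm p p"
    using orth[OF pA] unfolding u_split herm_add_left herm_add_right by simp
  then have "(norm u)^2 = (norm g)^2 + (norm p)^2"
    by (simp only: herm_self of_real_add[symmetric] of_real_eq_iff)
  then have pythagoras: "(norm g)^2 + (norm p)^2 = 1" using u1 by simp
  have wedge_sq: "(wedge_norm u x)^2 = 1 - (cmod (herm p x))^2" if "x \<in> vec.span A" "norm x = 1" for x
  proof -
    have "herm u x = herm p x"
      using orth[OF that(1)] herm_add_left[of g p x] by (simp add: p_def)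
    thus ?thesis using wedge_norm_square[of u x] u1 that(2) by simp
  qed
  obtain x where x: "x \<in> vec.span A" "norm x = 1" "cmod (herm p x) = norm p"
  proof (cases "p = 0")
    case True
    thus ?thesis using that a by (simp add: herm_def)
  next
    case False
    define x where "x = (1 / norm p) *\<^sub>R p"
    have "herm p x = complex_of_real (norm p)"
      unfolding x_def scaleR_as_smult herm_scale_right herm_self
      using False by (simp add: power2_eq_square)
    moreover have "x \<in> vec.span A" unfolding x_def scaleR_as_smult using pA by (rule vec.span_scale)
    moreover have "norm x = 1" using False by (simp add: x_def)
    ultimately show ?thesis using that by simp
  qed
  have "(wedge_norm u x)^2 = (norm g)^2" using wedge_sq[OF x(1,2)] x(3) pythagoras by simp
  hence "wedge_norm u x \<le> norm g" by (simp add: wedge_norm_nonneg)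
  thus ?thesis using fs_dist_hyp_le[of x S u] sub x by auto
qed

lemma vertex_dist_nonneg:
  assumes "j \<noteq> k" "norm (u j) = 1"
  shows "0 \<le> vertex_dist u k"
  unfolding vertex_dist_def
  by (rule fs_dist_hyp_nonneg[of "u j"]) (use assms in \<open>auto intro: vec.span_base\<close>)

section \<open>Triangular determinants over a linearly ordered index type\<close>

text \<open>The library states these for well-ordered index types; a finite linear order suffices.\<close>

lemma permutation_moves_some_index_down:
  fixes p :: "'n::{finite,linorder} \<Rightarrow> 'n"
  assumes p: "p permutes UNIV" and "p \<noteq> id"
  shows "\<exists>i. p i < i"
proof (rule ccontr)
  assume "\<not> (\<exists>i. p i < i)"
  hence ge: "\<And>i. i \<le> p i" by (simp add: not_less)
  define M where "M = {i. p i \<noteq> i}"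
  have "M \<noteq> {}" using \<open>p \<noteq> id\<close> unfolding M_def by (auto simp: fun_eq_iff)
  then have mM: "Max M \<in> M" by simp
  then have "Max M < p (Max M)" using ge[of "Max M"] unfolding M_def by simp
  moreover have "p (Max M) \<in> M"
    using mM permutes_inj[OF p] unfolding M_def by (auto dest: injD)
  then have "p (Max M) \<le> Max M" by (simp add: M_def)
  ultimately show False by (meson not_le)
qed

lemma det_upper_triangular:
  fixes A :: "'a::comm_ring_1^'n::{finite,linorder}^'n::{finite,linorder}"
  assumes lower_zero: "\<And>i j. j < i \<Longrightarrow> A$i$j = 0"
  shows "det A = (\<Prod>i\<in>UNIV. A$i$i)"
proof -
  have zero: "\<forall>p\<in>{p. p permutes UNIV} - {id}. of_int (sign p) * (\<Prod>i\<in>UNIV. A$i$p i) = 0"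
  proof
    fix p :: "'n \<Rightarrow> 'n" assume "p \<in> {p. p permutes UNIV} - {id}"
    then obtain i where "p i < i" using permutation_moves_some_index_down by blast
    then have "\<exists>i\<in>UNIV. A$i$p i = 0" using lower_zero by blast
    thus "of_int (sign p) * (\<Prod>i\<in>UNIV. A$i$p i) = 0" by (simp add: prod_zero)
  qed
  have id: "{id} \<subseteq> {p. p permutes (UNIV :: 'n set)}" by simp
  from sum.mono_neutral_cong_left[OF finite_permutations[OF finite_class.finite_UNIV] id zero]
  show ?thesis unfolding det_def by simp
qed

lemma det_cnj: "det (\<chi> i j. cnj (A$i$j)) = cnj (det (A::complex^'n^'n))"
  unfolding det_def by simp

text \<open>The matrix of Hermitian products (<v_k, w_l>) is (rows v) times the conjugate transpose of
  (rows w), so its determinant is det v * conj (det w).\<close>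

lemma det_herm_matrix:
  fixes v w :: "'n::finite \<Rightarrow> complex^'n"
  shows "det (\<chi> k l. herm (v k) (w l)) = det (\<chi> k. v k) * cnj (det (\<chi> k. w k))"
proof -
  have "(\<chi> k l. herm (v k) (w l)) = (\<chi> k. v k) ** transpose (\<chi> i j. cnj ((\<chi> k. w k)$i$j))"
    by (simp add: vec_eq_iff matrix_matrix_mult_def transpose_def herm_def)
  moreover have "det (transpose (\<chi> i j. cnj ((\<chi> k. w k)$i$j))) = cnj (det (\<chi> k. w k))"
    unfolding det_transpose by (rule det_cnj)
  ultimately show ?thesis by (simp only: det_mul)
qed

section \<open>Gram-Schmidt components and the volume of the simplex\<close>

definition earlier_span :: "('n::linorder \<Rightarrow> complex^'m::finite) \<Rightarrow> 'n \<Rightarrow> (complex^'m) set" where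
  "earlier_span u k = vec.span (u ` {i. i < k})"

definition gram_schmidt_components ::
    "('n::linorder \<Rightarrow> complex^'m::finite) \<Rightarrow> ('n \<Rightarrow> complex^'m) \<Rightarrow> bool" where
  "gram_schmidt_components u g \<longleftrightarrow>
     (\<forall>k. u k - g k \<in> earlier_span u k \<and> (\<forall>w\<in>earlier_span u k. herm (g k) w = 0))"

lemma gram_schmidt_components_exist:
  obtains g where "gram_schmidt_components u g"
proof -
  have "\<forall>k. \<exists>g. u k - g \<in> earlier_span u k \<and> (\<forall>w\<in>earlier_span u k. herm g w = 0)"
    by (metis earlier_span_def orthogonal_component_exists)
  then show ?thesis using that unfolding gram_schmidt_components_def by metis
qed

lemma earlier_span_mono: "k \<le> l \<Longrightarrow> earlier_span u k \<subseteq> earlier_span u l"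
  unfolding earlier_span_def by (intro vec.span_mono) auto

lemma earlier_vector_in_span: "l < k \<Longrightarrow> u l \<in> earlier_span u k"
  unfolding earlier_span_def by (intro vec.span_base) auto

lemma gram_schmidt_relations:
  assumes gs: "gram_schmidt_components u g"
  shows "\<And>k l. l < k \<Longrightarrow> herm (g k) (u l) = 0"
    and "\<And>k l. k \<noteq> l \<Longrightarrow> herm (g k) (g l) = 0"
    and "\<And>k. herm (g k) (u k) = of_real ((norm (g k))^2)"
proof -
  note comp = gs[unfolded gram_schmidt_components_def, rule_format]
  show earlier: "herm (g k) (u l) = 0" if "l < k" for k l
    using comp earlier_vector_in_span[OF that] by blast
  have g_in_later: "g k \<in> earlier_span u l" if "k < l" for k l
  proof -
    have "u k - g k \<in> earlier_span u l"
      using comp[of k] earlier_span_mono[OF less_imp_le[OF that], of u] by blast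
    moreover have "u k \<in> earlier_span u l" using earlier_vector_in_span[OF that] .
    ultimately have "u k - (u k - g k) \<in> earlier_span u l"
      unfolding earlier_span_def by (metis vec.span_diff)
    thus ?thesis by simp
  qed
  have "herm (g k) (g l) = 0" if "l < k" for k l using comp g_in_later that by blast
  then show "herm (g k) (g l) = 0" if "k \<noteq> l" for k l
    using that herm_cnj[of "g l" "g k"] by (cases "l < k") auto
  show "herm (g k) (u k) = of_real ((norm (g k))^2)" for k
    using comp[of k] herm_add_right[of "g k" "g k" "u k - g k"] by (simp add: herm_self)
qed

lemma gram_schmidt_component_nonzero:
  assumes gs: "gram_schmidt_components u g" and "inj u" and "vec.independent (range u)"
  shows "g k \<noteq> 0"
proof
  assume "g k = 0"
  hence "u k \<in> earlier_span u k" using gs unfolding gram_schmidt_components_def by (metis diff_zero)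
  moreover have "earlier_span u k \<subseteq> vec.span (range u - {u k})"
    unfolding earlier_span_def using \<open>inj u\<close> by (intro vec.span_mono) (auto dest: injD)
  ultimately show False using assms(3) unfolding vec.dependent_def by blast
qed

text \<open>|det(u_0, ..., u_n)| is the product of the lengths of the Gram-Schmidt components:
  <g_k, u_l> is upper triangular and <g_k, g_l> is diagonal, both with diagonal |g_k|^2.\<close>

lemma cmod_det_gram_schmidt:
  fixes u :: "'n::{finite,linorder} \<Rightarrow> complex^('n::{finite,linorder})"
  assumes gs: "gram_schmidt_components u g" and nonzero: "\<And>k. g k \<noteq> 0"
  shows "cmod (det (\<chi> k. u k)) = (\<Prod>k\<in>UNIV. norm (g k))"
proof -
  define P where "P = (\<Prod>k\<in>UNIV. norm (g k))"
  have P_pos: "P > 0" unfolding P_def using nonzero by (intro prod_pos) simp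
  have diag: "(\<Prod>k\<in>UNIV. complex_of_real ((norm (g k))^2)) = complex_of_real (P^2)"
    unfolding P_def prod_power_distrib of_real_prod ..
  have "det (\<chi> k. g k) * cnj (det (\<chi> k. u k)) = complex_of_real (P^2)"
    using det_upper_triangular[of "\<chi> k l. herm (g k) (u l)"] gram_schmidt_relations[OF gs] diag
    by (simp add: det_herm_matrix)
  then have mixed: "cmod (det (\<chi> k. g k)) * cmod (det (\<chi> k. u k)) = P^2"
    by (metis complex_mod_cnj norm_mult norm_of_real abs_power2)
  have "det (\<chi> k. g k) * cnj (det (\<chi> k. g k)) = complex_of_real (P^2)"
    using det_diagonal[of "\<chi> k l. herm (g k) (g l)"] gram_schmidt_relations(2)[OF gs] diag
    by (simp add: det_herm_matrix herm_self)
  then have "(cmod (det (\<chi> k. g k)))^2 = P^2"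
    by (metis complex_norm_square of_real_eq_iff)
  then have "cmod (det (\<chi> k. g k)) = P" using P_pos by simp
  then have "P * cmod (det (\<chi> k. u k)) = P * P" using mixed by (simp add: power2_eq_square)
  then show ?thesis using P_pos nonzero unfolding P_def by auto
qed

text \<open>For k > 0 the earlier span V k lies in the face opposite u k and contains the unit vector
  u 0, so d k <= |g k|; also g 0 = u 0 is a unit vector.\<close>

lemma vertex_dist_le_gram_schmidt:
  fixes u :: "'n::{finite,linorder} \<Rightarrow> complex^('n::{finite,linorder})"
  assumes gs: "gram_schmidt_components u g" and unit: "\<And>j. norm (u j) = 1"
    and "Min UNIV < k"
  shows "vertex_dist u k \<le> norm (g k)"
proof -
  let ?V = "u ` {i. i < k}"
  have "u k - g k \<in> vec.span ?V" "\<And>w. w \<in> vec.span ?V \<Longrightarrow> herm (g k) w = 0"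
    using gs unfolding gram_schmidt_components_def earlier_span_def by auto
  moreover have "u (Min UNIV) \<in> vec.span ?V"
    using earlier_vector_in_span[OF \<open>Min UNIV < k\<close>] unfolding earlier_span_def .
  moreover have "vec.span ?V \<subseteq> vec.span (u ` (UNIV - {k}))" by (intro vec.span_mono) auto
  ultimately show ?thesis
    unfolding vertex_dist_def using fs_dist_hyp_le_orthogonal_component unit by blast
qed

lemma gram_schmidt_first:
  fixes u :: "'n::{finite,linorder} \<Rightarrow> complex^'m::finite"
  assumes "gram_schmidt_components u g"
  shows "g (Min UNIV) = u (Min UNIV)"
proof -
  have "{i. i < Min (UNIV :: 'n set)} = {}" by (auto simp: not_less)
  then have "u (Min UNIV) - g (Min UNIV) \<in> vec.span {}"
    using assms unfolding gram_schmidt_components_def earlier_span_def by (metis image_empty)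
  then show ?thesis by simp
qed

lemma prod_vertex_dist_le_det:
  fixes u :: "'n::{finite,linorder} \<Rightarrow> complex^('n::{finite,linorder})"
  assumes "inj u" and "vec.independent (range u)" and unit: "\<And>j. norm (u j) = 1"
  shows "(\<Prod>k\<in>UNIV - {Min UNIV}. vertex_dist u k) \<le> cmod (det (\<chi> j. u j))"
    and "0 < cmod (det (\<chi> j. u j))"
proof -
  obtain g where gs: "gram_schmidt_components u g" by (rule gram_schmidt_components_exist)
  have nonzero: "g k \<noteq> 0" for k using gram_schmidt_component_nonzero[OF gs assms(1,2)] .
  have det_eq: "cmod (det (\<chi> j. u j)) = (\<Prod>k\<in>UNIV. norm (g k))"
    by (rule cmod_det_gram_schmidt[OF gs nonzero])
  show "0 < cmod (det (\<chi> j. u j))" unfolding det_eq using nonzero by (intro prod_pos) simp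
  have "(\<Prod>k\<in>UNIV - {Min UNIV}. vertex_dist u k) \<le> (\<Prod>k\<in>UNIV - {Min UNIV}. norm (g k))"
  proof (rule prod_mono)
    fix k :: 'n assume "k \<in> UNIV - {Min UNIV}"
    moreover have "Min UNIV \<le> k" by (rule Min_le) auto
    ultimately have "Min UNIV < k" by (auto intro: order_le_neq_trans)
    then show "0 \<le> vertex_dist u k \<and> vertex_dist u k \<le> norm (g k)"
      using vertex_dist_nonneg[of "Min UNIV" k u] vertex_dist_le_gram_schmidt[OF gs unit] unit
      by auto
  qed
  also have "\<dots> = (\<Prod>k\<in>UNIV. norm (g k))"
    using gram_schmidt_first[OF gs] unit by (simp add: prod.remove[of UNIV "Min UNIV"])
  finally show "(\<Prod>k\<in>UNIV - {Min UNIV}. vertex_dist u k) \<le> cmod (det (\<chi> j. u j))"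
    unfolding det_eq .
qed

section \<open>An elementary inequality for the minimum\<close>

lemma Min_power_le_prod_off:
  fixes d :: "'a::finite \<Rightarrow> real"
  assumes nonneg: "\<And>k. 0 \<le> d k" and prod_le: "(\<Prod>k\<in>UNIV - {j}. d k) \<le> D"
  shows "Min (range d) ^ (CARD('a) - 1) \<le> D"
    and "0 < D \<Longrightarrow> Min (range d) ^ (CARD('a) - 1) = D \<Longrightarrow>
           CARD('a) - 1 \<le> card {k. d k = Min (range d)}"
proof -
  define m where "m = Min (range d)"
  have m_le: "m \<le> d k" for k unfolding m_def by simp
  have m_nonneg: "0 \<le> m" unfolding m_def using nonneg by simp
  have card_off: "card (UNIV - {j}) = CARD('a) - 1" by (simp add: card_Diff_singleton)
  have power_le_prod: "m ^ card B \<le> (\<Prod>k\<in>B. d k)" for B :: "'a set"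
    using prod_mono[of B "\<lambda>_. m" d] m_nonneg m_le by simp
  show "m ^ (CARD('a) - 1) \<le> D"
    using power_le_prod[of "UNIV - {j}"] prod_le unfolding card_off by simp
  assume "0 < D" and eq: "m ^ (CARD('a) - 1) = D"
  have "d k = m" if k: "k \<in> UNIV - {j}" for k
  proof (rule ccontr)
    assume "d k \<noteq> m"
    then have "m < d k" using m_le[of k] by simp
    have card_rest: "card (UNIV - {j} - {k}) = CARD('a) - 1 - 1"
      using k card_off by (simp add: card_Diff_singleton)
    have "card {j, k} \<le> CARD('a)" by (rule card_mono) auto
    then have "CARD('a) - 1 \<noteq> 0" using k by auto
    then have "0 < m" using \<open>0 < D\<close> eq m_nonneg by (cases "m = 0") (auto simp: power_0_left)
    then have "m * m ^ (CARD('a) - 1 - 1) < d k * (\<Prod>i\<in>UNIV - {j} - {k}. d i)"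
      using \<open>m < d k\<close> power_le_prod[of "UNIV - {j} - {k}"] unfolding card_rest
      by (intro mult_less_le_imp_less) auto
    also have "\<dots> = (\<Prod>i\<in>UNIV - {j}. d i)" using k by (simp add: prod.remove)
    also have "m * m ^ (CARD('a) - 1 - 1) = m ^ (CARD('a) - 1)"
    proof -
      have "Suc (CARD('a) - 1 - 1) = CARD('a) - 1" using \<open>CARD('a) - 1 \<noteq> 0\<close> by simp
      then show ?thesis by (metis power_Suc)
    qed
    finally show False using eq prod_le by simp
  qed
  then have "UNIV - {j} \<subseteq> {k. d k = m}" by blast
  then show "CARD('a) - 1 \<le> card {k. d k = Min (range d)}"
    using card_mono[of "{k. d k = m}" "UNIV - {j}"] card_off unfolding m_def by simp
qed

theorem mainTheorem8:
  fixes u :: "'n::{finite,linorder} \<Rightarrow> complex^('n::{finite,linorder})"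
  assumes n1: "CARD('n::{finite,linorder}) \<ge> 2"
    and indep: "inj u" "vec.independent (range u)"
    and unit: "\<And>j. norm (u j) = 1"
  shows "(Min (range (vertex_dist u))) ^ (CARD('n::{finite,linorder}) - 1) \<le> cmod (det (\<chi> j. u j))
    \<and> ((Min (range (vertex_dist u))) ^ (CARD('n::{finite,linorder}) - 1) = cmod (det (\<chi> j. u j)) \<longrightarrow>
           CARD('n::{finite,linorder}) - 1 \<le> card {j. vertex_dist u j = Min (range (vertex_dist u))})"
proof -
  have nonneg: "0 \<le> vertex_dist u k" for k
  proof -
    have "card (UNIV - {k}) \<noteq> 0" using n1 by (simp add: card_Diff_singleton)
    then have "UNIV - {k} \<noteq> {}" by (metis card.empty)
    then obtain j where "j \<noteq> k" by blast
    then show ?thesis using vertex_dist_nonneg unit by blast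
  qed
  note bound = Min_power_le_prod_off[OF nonneg prod_vertex_dist_le_det(1)[OF indep unit]]
  show ?thesis using bound prod_vertex_dist_le_det(2)[OF indep unit] by blast
qed

end
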